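(* Let $\mathscr C$ be a class of finite groups and $G$ a nontrivial finite group. Then $G\in\mathscr C^{**}$ if and only if $G/\mathrm{Rad}(G)$ is isomorphic to a nonempty direct product of finite simple groups belonging to $\mathscr C$.
   Context: A class of finite groups is a nonempty collection of finite groups closed under isomorphism. The dual class $\mathscr C^*$ is the class of finite groups $G$ such that every normal subgroup $H$ of $G$ with $G/H\in\mathscr C$ satisfies $H=G$; $\mathscr C^{**}=(\mathscr C^* )^*$. For a nontrivial finite group $G$, its Baer radical $\mathrm{Rad}(G)$ is the intersection of all maximal normal subgroups of $G$ (normal subgroups $H\ne G$ with $G/H$ simple). *)

theory Defs
  imports "HOL-Algebra.Algebra"
begin

text \<open>A class of finite groups is represented by a predicate C on groups whose carrier
lies in nat (every finite group is isomorphic to such a group).\<close>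

definition in_class :: "(nat monoid \<Rightarrow> bool) \<Rightarrow> ('a, 'b) monoid_scheme \<Rightarrow> bool" where
  "in_class C G \<longleftrightarrow> (\<exists>H. C H \<and> G \<cong> H)"

definition group_class :: "(nat monoid \<Rightarrow> bool) \<Rightarrow> bool" where
  "group_class C \<longleftrightarrow> (\<exists>H. C H) \<and> (\<forall>H. C H \<longrightarrow> group H \<and> finite (carrier H))"

definition dual_class :: "(nat monoid \<Rightarrow> bool) \<Rightarrow> nat monoid \<Rightarrow> bool" where
  "dual_class C G \<longleftrightarrow> group G \<and> finite (carrier G) \<and>
     (\<forall>H. H \<lhd> G \<and> in_class C (G Mod H) \<longrightarrow> H = carrier G)"

definition maximal_normal :: "('a, 'b) monoid_scheme \<Rightarrow> 'a set \<Rightarrow> bool" where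
  "maximal_normal G H \<longleftrightarrow> H \<lhd> G \<and> H \<noteq> carrier G \<and> simple_group (G Mod H)"

definition baer_rad :: "('a, 'b) monoid_scheme \<Rightarrow> 'a set" where
  "baer_rad G = \<Inter> {H. maximal_normal G H}"

end

theory Submission
  imports Defs
begin

text \<open>
  For finite groups, \<open>G \<in> \<C>\<^sup>*\<close> says that no nontrivial quotient of \<open>G\<close> lies in \<open>\<C>\<close>.
  Hence \<open>G \<in> \<C>\<^sup>*\<^sup>*\<close> iff every nontrivial quotient of \<open>G\<close> has a nontrivial quotient in \<open>\<C>\<close>.
  Every nontrivial finite group has a simple quotient, a quotient of a quotient of \<open>G\<close> is a
  quotient of \<open>G\<close>, and the only nontrivial quotient of a simple group is the group itself; so
  this holds iff \<open>G/N \<in> \<C>\<close> for every maximal normal subgroup \<open>N\<close>.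

  A maximal
  normal subgroup either contains a normal subgroup \<open>M\<close> or supplements it, so adding the
  maximal normal subgroups one at a time and using \<open>G/(N \<inter> M) \<cong> G/N \<times> G/M\<close> in the second
  case writes \<open>G/Rad(G)\<close> as a product of some of the \<open>G/N\<close>. Conversely, if
  \<open>G/Rad(G) \<cong> \<Prod>\<^sub>i F\<^sub>i\<close> with simple \<open>F\<^sub>i\<close>, the kernels \<open>K\<^sub>i\<close> of the projections are maximal
  normal with intersection \<open>Rad(G)\<close>, and the second isomorphism theorem shows that every
  maximal normal \<open>N \<supseteq> \<Inter>\<^sub>i K\<^sub>i\<close> has \<open>G/N \<cong> G/K\<^sub>i\<close> for some \<open>i\<close>.
\<close>

section \<open>Quotients and isomorphisms\<close>

lemma (in group) ex_nat_iso_copy: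
  assumes "finite (carrier G)"
  obtains H :: "nat monoid" where "group H" "finite (carrier H)" "G \<cong> H"
proof -
  obtain f :: "'a \<Rightarrow> nat" where "inj_on f (carrier G)"
    using ex_bij_betw_finite_nat[OF assms] bij_betw_imp_inj_on by blast
  then show thesis
    using that[of "image_group f G"] inj_imp_image_group_is_group inj_imp_image_group_iso assms
    by (auto simp: image_group_carrier is_iso_def)
qed

lemma (in normal) finite_FactGroup:
  "finite (carrier G) \<Longrightarrow> finite (carrier (G Mod H))"
  by (simp add: FactGroup_def RCOSETS_def)

lemma (in normal) FactGroup_nontrivial:
  assumes "H \<noteq> carrier G"
  shows "carrier (G Mod H) \<noteq> {\<one>\<^bsub>G Mod H\<^esub>}"
proof
  assume triv: "carrier (G Mod H) = {\<one>\<^bsub>G Mod H\<^esub>}"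
  obtain x where x: "x \<in> carrier G" "x \<notin> H" using assms subset by blast
  have "H #> x \<in> carrier (G Mod H)" using x by (auto simp: FactGroup_def RCOSETS_def)
  then have "H #> x = H" using triv by (simp add: FactGroup_def)
  then show False using x coset_join1 subgroup_axioms by blast
qed

lemma is_iso_simple_group:
  assumes "simple_group G" "group H" "G \<cong> H"
  shows "simple_group H"
  using assms simple_group.iso_simple unfolding is_iso_def by blast

lemma (in group_hom) normal_preimage:
  assumes surj: "h ` carrier G = carrier H" and K: "K \<lhd> H"
  defines "N \<equiv> {x \<in> carrier G. h x \<in> K}"
  shows "N \<lhd> G" and "G Mod N \<cong> H Mod K" and "N = carrier G \<longleftrightarrow> K = carrier H"
proof -
  interpret K: normal K H by (rule K)
  define q where "q = (\<lambda>x. K #>\<^bsub>H\<^esub> h x)"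
  have "q \<in> hom G (H Mod K)"
    using Group.hom_compose[OF homh K.r_coset_hom_Mod] by (simp add: q_def comp_def)
  then interpret q: group_hom G "H Mod K" q
    by (simp add: group_hom_def group_hom_axioms_def K.factorgroup_is_group)
  have ker: "kernel G (H Mod K) q = N"
    using H.coset_join1[OF _ _ K.subgroup_axioms] H.coset_join2[OF _ K.subgroup_axioms]
    by (auto simp: kernel_def q_def N_def FactGroup_def)
  have "q ` carrier G = carrier (H Mod K)"
    using surj by (auto simp: q_def FactGroup_def RCOSETS_def image_iff) (metis imageE)
  then show "G Mod N \<cong> H Mod K" using q.FactGroup_iso ker by simp
  show "N \<lhd> G" using q.normal_kernel ker by simp
  show "N = carrier G \<longleftrightarrow> K = carrier H"
  proof
    assume "N = carrier G"
    then have "h ` carrier G \<subseteq> K" by (auto simp: N_def)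
    then show "K = carrier H" using surj K.subset by blast
  qed (auto simp: N_def)
qed

lemma (in group) normal_INT:
  assumes "J \<noteq> {}" "\<And>j. j \<in> J \<Longrightarrow> N j \<lhd> G"
  shows "(\<Inter>j\<in>J. N j) \<lhd> G"
proof -
  have "subgroup (\<Inter>j\<in>J. N j) G"
    using assms by (intro subgroups_Inter) (auto dest: normal_imp_subgroup)
  then show ?thesis using assms by (auto simp: normal_inv_iff)
qed

lemma (in normal) iso_FactGroup_obtain_hom:
  assumes "G Mod H \<cong> P" "group P"
  obtains \<psi> where "\<psi> \<in> hom G P" "\<psi> ` carrier G = carrier P" "kernel G P \<psi> = H"
proof -
  obtain \<phi> where "\<phi> \<in> iso (G Mod H) P" using assms(1) by (auto simp: is_iso_def)
  moreover have "\<one>\<^bsub>G Mod H\<^esub> = H" by (simp add: FactGroup_def)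
  ultimately have \<phi>_hom: "\<phi> \<in> hom (G Mod H) P" and \<phi>_surj: "\<phi> ` carrier (G Mod H) = carrier P"
    and \<phi>_ker: "kernel (G Mod H) P \<phi> = {H}"
    using iso_kernel_image[OF factorgroup_is_group assms(2)] by auto
  define \<psi> where "\<psi> = \<phi> \<circ> (\<lambda>x. H #> x)"
  have \<rho>_surj: "(\<lambda>x. H #> x) ` carrier G = carrier (G Mod H)" by (auto simp: FactGroup_def RCOSETS_def)
  have "x \<in> kernel G P \<psi> \<longleftrightarrow> x \<in> H" for x
  proof (cases "x \<in> carrier G")
    case True
    then have "H #> x \<in> carrier (G Mod H)" using \<rho>_surj by blast
    then have "\<psi> x = \<one>\<^bsub>P\<^esub> \<longleftrightarrow> H #> x = H" using \<phi>_ker by (auto simp: kernel_def \<psi>_def)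
    then show ?thesis
      using True coset_join1[OF _ _ subgroup_axioms] coset_join2[OF _ subgroup_axioms]
      by (auto simp: kernel_def)
  qed (use subset in \<open>auto simp: kernel_def\<close>)
  moreover have "\<psi> \<in> hom G P" unfolding \<psi>_def by (rule Group.hom_compose[OF r_coset_hom_Mod \<phi>_hom])
  moreover have "\<psi> ` carrier G = carrier P"
    unfolding \<psi>_def image_comp[symmetric] \<rho>_surj by (rule \<phi>_surj)
  ultimately show thesis using that by blast
qed

section \<open>Maximal normal subgroups\<close>

lemma (in normal) simple_FactGroup_if_maximal:
  assumes fin: "finite (carrier G)" and proper: "H \<noteq> carrier G"
    and max: "\<And>N. N \<lhd> G \<Longrightarrow> N \<noteq> carrier G \<Longrightarrow> H \<subseteq> N \<Longrightarrow> N = H"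
  shows "simple_group (G Mod H)"
proof -
  interpret Q: group "G Mod H" by (rule factorgroup_is_group)
  interpret \<rho>: group_hom G "G Mod H" "\<lambda>x. H #> x"
    by (simp add: group_hom_def group_hom_axioms_def r_coset_hom_Mod Q.is_group)
  have \<rho>_surj: "(\<lambda>x. H #> x) ` carrier G = carrier (G Mod H)"
    by (auto simp: FactGroup_def RCOSETS_def)
  have H_one: "H = \<one>\<^bsub>G Mod H\<^esub>" by (simp add: FactGroup_def)
  have "0 < order (G Mod H)" "order (G Mod H) \<noteq> 1"
    using Q.order_gt_0_iff_finite Q.order_one_triv_iff finite_FactGroup[OF fin]
      FactGroup_nontrivial[OF proper] by auto
  then have "1 < order (G Mod H)" by linarith
  moreover have "K = carrier (G Mod H) \<or> K = {\<one>\<^bsub>G Mod H\<^esub>}" if K: "K \<lhd> G Mod H" for K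
  proof -
    interpret K: normal K "G Mod H" by (rule K)
    let ?N = "{x \<in> carrier G. H #> x \<in> K}"
    have H_sub: "H \<subseteq> ?N" using coset_join2[OF _ subgroup_axioms] subset K.one_closed H_one by auto
    have K_sub: "K \<subseteq> (\<lambda>x. H #> x) ` ?N"
    proof
      fix Z assume "Z \<in> K"
      moreover then obtain x where "x \<in> carrier G" "Z = H #> x" using K.subset \<rho>_surj by blast
      ultimately show "Z \<in> (\<lambda>x. H #> x) ` ?N" by blast
    qed
    note preimage = \<rho>.normal_preimage[OF \<rho>_surj K]
    show ?thesis
    proof (cases "?N = carrier G")
      case False
      then have "?N = H" using max preimage(1) H_sub by blast
      then have "K \<subseteq> {H}" using K_sub coset_join2[OF _ subgroup_axioms] subset by auto
      then show ?thesis using K.one_closed H_one by auto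
    qed (use preimage(3) in simp)
  qed
  ultimately show ?thesis by (intro simple_group.intro simple_group_axioms.intro Q.is_group) auto
qed

lemma (in group) exists_maximal_normal:
  assumes fin: "finite (carrier G)" and nontriv: "carrier G \<noteq> {\<one>}"
  obtains M where "maximal_normal G M"
proof -
  let ?S = "{M. M \<lhd> G \<and> M \<noteq> carrier G}"
  have finS: "finite ?S"
    by (rule finite_subset[of _ "Pow (carrier G)"])
      (auto simp: fin dest: normal_imp_subgroup subgroup.subset)
  have "?S \<noteq> {}" using one_is_normal nontriv by auto
  from finite_has_maximal[OF finS this]
  obtain M where M: "M \<in> ?S" and max: "\<forall>N\<in>?S. M \<subseteq> N \<longrightarrow> M = N" ..
  then have "simple_group (G Mod M)"
    using normal.simple_FactGroup_if_maximal[OF _ fin] by (metis (mono_tags, lifting) mem_Collect_eq)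
  then show thesis using that[of M] M by (simp add: maximal_normal_def)
qed

lemma (in group_hom) maximal_normal_kernel:
  assumes simple: "simple_group H" and surj: "h ` carrier G = carrier H"
  shows "G Mod kernel G H h \<cong> H" and "maximal_normal G (kernel G H h)"
proof -
  show quot: "G Mod kernel G H h \<cong> H" by (rule FactGroup_iso[OF surj])
  have "group (G Mod kernel G H h)" using normal.factorgroup_is_group normal_kernel by blast
  then have "simple_group (G Mod kernel G H h)"
    using is_iso_simple_group[OF simple] group.iso_sym[OF _ quot] by blast
  moreover have "kernel G H h \<noteq> carrier G"
    using trivial_hom_iff surj simple_group.simple_not_triv[OF simple] by simp
  ultimately show "maximal_normal G (kernel G H h)" using normal_kernel by (simp add: maximal_normal_def)
qed

lemma (in group) maximal_normal_subset_eq: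
  assumes N: "maximal_normal G N" and K: "K \<lhd> G" "N \<subseteq> K" "K \<noteq> carrier G"
  shows "K = N"
proof -
  interpret N: normal N G using N by (simp add: maximal_normal_def)
  interpret K: normal K G by (rule K(1))
  interpret \<rho>: group_hom G "G Mod N" "\<lambda>x. N #> x"
    by (simp add: group_hom_def group_hom_axioms_def N.r_coset_hom_Mod N.factorgroup_is_group)
  have \<rho>_surj: "(\<lambda>x. N #> x) ` carrier G = carrier (G Mod N)"
    by (auto simp: FactGroup_def RCOSETS_def)
  have "(\<lambda>x. N #> x) ` K \<lhd> G Mod N"
    using K.surj_hom_normal_subgroup[OF \<rho>.group_hom_axioms \<rho>_surj] .
  moreover have "simple_group (G Mod N)" using N by (simp add: maximal_normal_def)
  moreover have "\<one>\<^bsub>G Mod N\<^esub> = N" by (simp add: FactGroup_def)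
  ultimately consider "(\<lambda>x. N #> x) ` K = carrier (G Mod N)" | "(\<lambda>x. N #> x) ` K = {N}"
    using simple_group.no_real_normal_subgroup by metis
  then show ?thesis
  proof cases
    case 1
    have "carrier G \<subseteq> K"
    proof
      fix x assume x: "x \<in> carrier G"
      then have "N #> x \<in> (\<lambda>x. N #> x) ` K" using 1 \<rho>_surj by blast
      then obtain k where k: "k \<in> K" "N #> x = N #> k" by blast
      then have "x \<in> N #> k" using rcos_self[OF x N.subgroup_axioms] by simp
      then obtain n where "n \<in> N" "x = n \<otimes> k" unfolding r_coset_def by blast
      then show "x \<in> K" using k(1) K(2) K.m_closed by blast
    qed
    then show ?thesis using K(3) K.subset by blast
  next
    case 2
    have "K \<subseteq> N"
    proof
      fix k assume "k \<in> K"
      then have "N #> k = N" using 2 by blast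
      then show "k \<in> N" using coset_join1[OF _ _ N.subgroup_axioms] K.subset \<open>k \<in> K\<close> by blast
    qed
    then show ?thesis using K(2) by blast
  qed
qed

lemma (in normal) maximal_normal_FactGroup_lift:
  assumes "maximal_normal (G Mod H) L"
  obtains N where "maximal_normal G N" "G Mod N \<cong> (G Mod H) Mod L"
proof -
  have L: "L \<lhd> G Mod H" "L \<noteq> carrier (G Mod H)" "simple_group ((G Mod H) Mod L)"
    using assms by (auto simp: maximal_normal_def)
  interpret \<rho>: group_hom G "G Mod H" "\<lambda>x. H #> x"
    by (simp add: group_hom_def group_hom_axioms_def r_coset_hom_Mod factorgroup_is_group)
  have "(\<lambda>x. H #> x) ` carrier G = carrier (G Mod H)" by (auto simp: FactGroup_def RCOSETS_def)
  note preimage = \<rho>.normal_preimage[OF this L(1)]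
  define N where "N = {x \<in> carrier G. H #> x \<in> L}"
  have quot_iso: "G Mod N \<cong> (G Mod H) Mod L" using preimage(2) by (simp add: N_def)
  have "group (G Mod N)" using normal.factorgroup_is_group preimage(1) by (simp add: N_def)
  then have "simple_group (G Mod N)"
    using is_iso_simple_group[OF L(3)] group.iso_sym[OF _ quot_iso] by blast
  then have "maximal_normal G N" using preimage(1,3) L(2) by (simp add: maximal_normal_def N_def)
  then show thesis using that quot_iso by blast
qed

lemma (in group) maximal_normal_set_mult_eq:
  assumes N: "maximal_normal G N" and M: "M \<lhd> G" "\<not> M \<subseteq> N"
  shows "N <#> M = carrier G"
proof (rule ccontr)
  assume ne: "N <#> M \<noteq> carrier G"
  have N_normal: "N \<lhd> G" using N by (simp add: maximal_normal_def)
  interpret N: normal N G by (rule N_normal)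
  interpret M: normal M G by (rule M(1))
  have "N \<subseteq> N <#> M"
  proof
    fix n assume "n \<in> N"
    then have "n = n \<otimes> \<one>" using N.subset by auto
    then show "n \<in> N <#> M" using \<open>n \<in> N\<close> M.one_closed unfolding set_mult_def by blast
  qed
  have "M \<subseteq> N <#> M"
  proof
    fix m assume "m \<in> M"
    then have "m = \<one> \<otimes> m" using M.subset by auto
    then show "m \<in> N <#> M" using \<open>m \<in> M\<close> N.one_closed unfolding set_mult_def by blast
  qed
  have "N <#> M = N"
    using maximal_normal_subset_eq[OF N normal_subgroup_set_mult_closed[OF N_normal M(1)]]
      \<open>N \<subseteq> N <#> M\<close> ne by blast
  then show False using \<open>M \<subseteq> N <#> M\<close> M(2) by blast
qed

lemma (in group) quotient_iso_of_set_mult_eq: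
  assumes "N \<lhd> G" "subgroup M G" "N <#> M = carrier G"
  shows "G\<lparr>carrier := M\<rparr> Mod (N \<inter> M) \<cong> G Mod N"
proof -
  interpret second_isomorphism_grp N G M
    using assms by (simp add: second_isomorphism_grp_def second_isomorphism_grp_axioms_def)
  show ?thesis using is_isoI[OF normal_intersection_quotient_isom] assms(3) by simp
qed

lemma (in group) maximal_normal_Int_subset:
  assumes N: "N \<lhd> G" and K: "maximal_normal G K" and M: "M \<lhd> G"
    and KM: "K \<inter> M \<subseteq> N" and MN: "\<not> M \<subseteq> N"
  shows "M \<inter> N \<subseteq> K"
proof (rule ccontr)
  interpret M: normal M G by (rule M)
  have K_normal: "K \<lhd> G" using K by (simp add: maximal_normal_def)
  assume "\<not> M \<inter> N \<subseteq> K"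
  then have KMN: "K <#> (M \<inter> N) = carrier G"
    using maximal_normal_set_mult_eq[OF K normal_subgroup_intersect[OF M N]] by blast
  have "M \<subseteq> N"
  proof
    fix m assume m: "m \<in> M"
    then have "m \<in> K <#> (M \<inter> N)" using KMN M.subset by blast
    then obtain k n where kn: "k \<in> K" "n \<in> M \<inter> N" "m = k \<otimes> n"
      unfolding set_mult_def by blast
    moreover have "k \<in> carrier G" "n \<in> carrier G"
      using kn(1,2) K_normal M.subset subgroup.subset[OF normal_imp_subgroup] by blast+
    ultimately have "k = m \<otimes> inv n" by (simp add: m_assoc)
    then have "k \<in> M" using m kn(2) M.m_closed M.m_inv_closed by (metis IntD1)
    then have "k \<in> K \<inter> M" using kn(1) by blast
    then show "m \<in> N" using KM kn subgroup.m_closed[OF normal_imp_subgroup[OF N]] by blast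
  qed
  then show False using MN by blast
qed

lemma (in group) maximal_normal_quotient_iso:
  assumes N: "maximal_normal G N" and K: "maximal_normal G K" and M: "M \<lhd> G"
    and KM: "K \<inter> M \<subseteq> N" and MN: "\<not> M \<subseteq> N"
  shows "G Mod N \<cong> G Mod K"
proof -
  have N_normal: "N \<lhd> G" and K_normal: "K \<lhd> G" using N K by (auto simp: maximal_normal_def)
  interpret M: normal M G by (rule M)
  have "M \<inter> N \<subseteq> K" by (rule maximal_normal_Int_subset[OF N_normal K M KM MN])
  then have Int_eq: "N \<inter> M = K \<inter> M" using KM by blast
  have "\<not> M \<subseteq> K" using KM MN by blast
  have to_N: "G\<lparr>carrier := M\<rparr> Mod (N \<inter> M) \<cong> G Mod N"
    using quotient_iso_of_set_mult_eq[OF N_normal M.subgroup_axioms]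
      maximal_normal_set_mult_eq[OF N M MN] by blast
  have to_K: "G\<lparr>carrier := M\<rparr> Mod (N \<inter> M) \<cong> G Mod K"
    using quotient_iso_of_set_mult_eq[OF K_normal M.subgroup_axioms]
      maximal_normal_set_mult_eq[OF K M \<open>\<not> M \<subseteq> K\<close>] Int_eq by simp
  have "group (G\<lparr>carrier := M\<rparr> Mod (N \<inter> M))"
    using normal.factorgroup_is_group normal_Int_subgroup[OF M.subgroup_axioms N_normal] by blast
  then show ?thesis using iso_trans[OF group.iso_sym to_K] to_N by blast
qed

lemma (in group) maximal_normal_above_INT_iso:
  assumes "finite I" "I \<noteq> {}" "\<And>i. i \<in> I \<Longrightarrow> maximal_normal G (K i)"
    and N: "maximal_normal G N" and "(\<Inter>i\<in>I. K i) \<subseteq> N"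
  shows "\<exists>i\<in>I. G Mod N \<cong> G Mod K i"
  using assms(1-3,5)
proof (induction I rule: finite_ne_induct)
  case (singleton j)
  have "N = K j"
    using maximal_normal_subset_eq[OF singleton.prems(1)] singleton.prems(2) N
    by (simp add: maximal_normal_def)
  then show ?case by simp
next
  case (insert j J)
  have Kj: "maximal_normal G (K j)" and KJ: "\<And>i. i \<in> J \<Longrightarrow> maximal_normal G (K i)"
    using insert.prems(1) by auto
  define M where "M = (\<Inter>i\<in>J. K i)"
  have M: "M \<lhd> G"
    unfolding M_def using normal_INT[OF insert.hyps(2)] KJ by (auto simp: maximal_normal_def)
  show ?case
  proof (cases "M \<subseteq> N")
    case True
    then show ?thesis using insert.IH[OF KJ] by (auto simp: M_def)
  next
    case False
    have "K j \<inter> M \<subseteq> N" using insert.prems(2) by (auto simp: M_def)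
    then have "G Mod N \<cong> G Mod K j" by (rule maximal_normal_quotient_iso[OF N Kj M _ False])
    then show ?thesis by blast
  qed
qed

section \<open>Quotients by intersections and direct products\<close>

lemma (in group) quotient_Int_iso_DirProd:
  assumes N: "N \<lhd> G" and M: "M \<lhd> G" and NM: "N <#> M = carrier G"
  shows "G Mod (N \<inter> M) \<cong> (G Mod N) \<times>\<times> (G Mod M)"
proof -
  interpret N: normal N G by (rule N)
  interpret M: normal M G by (rule M)
  define h where "h = (\<lambda>x. (N #> x, M #> x))"
  have "h \<in> hom G ((G Mod N) \<times>\<times> (G Mod M))"
    by (rule homI) (auto simp: h_def FactGroup_def RCOSETS_def N.rcos_sum M.rcos_sum)
  then interpret h: group_hom G "(G Mod N) \<times>\<times> (G Mod M)" h
    by (simp add: group_hom_def group_hom_axioms_def DirProd_group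
        N.factorgroup_is_group M.factorgroup_is_group)
  have ker: "kernel G ((G Mod N) \<times>\<times> (G Mod M)) h = N \<inter> M"
    using coset_join1[OF _ _ N.subgroup_axioms] coset_join2[OF _ N.subgroup_axioms]
      coset_join1[OF _ _ M.subgroup_axioms] coset_join2[OF _ M.subgroup_axioms] N.subset
    by (auto simp: kernel_def h_def FactGroup_def)
  have "carrier ((G Mod N) \<times>\<times> (G Mod M)) \<subseteq> h ` carrier G"
  proof
    fix p assume "p \<in> carrier ((G Mod N) \<times>\<times> (G Mod M))"
    then obtain a b where ab: "a \<in> carrier G" "b \<in> carrier G" "p = (N #> a, M #> b)"
      by (auto simp: FactGroup_def RCOSETS_def)
    then obtain n m where nm: "n \<in> N" "m \<in> M" "a \<otimes> inv b = n \<otimes> m"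
      using NM unfolding set_mult_def by (metis (no_types, lifting) UN_E inv_closed m_closed singletonD)
    have n: "n \<in> carrier G" and m: "m \<in> carrier G" using nm N.subset M.subset by auto
    \<comment> \<open>The element \<open>m \<otimes> b\<close> lies in both cosets \<open>N #> a\<close> and \<open>M #> b\<close>.\<close>
    have "a = n \<otimes> (m \<otimes> b)"
      using nm(3) ab n m by (metis inv_solve_right m_assoc m_closed inv_closed)
    then have "N #> (m \<otimes> b) = N #> a"
      using coset_mult_assoc[OF N.subset n, of "m \<otimes> b"] N.rcos_const[OF is_group nm(1)] m ab
      by simp
    moreover have "M #> (m \<otimes> b) = M #> b"
      using coset_mult_assoc[OF M.subset m ab(2)] M.rcos_const[OF is_group nm(2)] by simp
    ultimately show "p \<in> h ` carrier G" using ab m by (auto simp: h_def)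
  qed
  then have "h ` carrier G = carrier ((G Mod N) \<times>\<times> (G Mod M))"
    using h.hom_closed by blast
  then show ?thesis using h.FactGroup_iso ker by simp
qed

lemma iso_product_group_singleton:
  "F j \<cong> product_group {j} F"
proof (rule is_isoI, rule isoI)
  show "(\<lambda>a. \<lambda>i\<in>{j}. a) \<in> hom (F j) (product_group {j} F)"
    by (rule homI) auto
  show "bij_betw (\<lambda>a. \<lambda>i\<in>{j}. a) (carrier (F j)) (carrier (product_group {j} F))"
    by (rule bij_betwI[where g = "\<lambda>x. x j"]) (auto simp: PiE_iff extensional_def)
qed

lemma iso_product_group_insert:
  assumes "j \<notin> I"
  shows "F j \<times>\<times> product_group I F \<cong> product_group (insert j I) F"
proof (rule is_isoI, rule isoI)
  let ?f = "\<lambda>(a, x). \<lambda>i\<in>insert j I. if i = j then a else x i"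
  show "?f \<in> hom (F j \<times>\<times> product_group I F) (product_group (insert j I) F)"
    by (rule homI) (auto simp: PiE_iff extensional_def fun_eq_iff)
  show "bij_betw ?f (carrier (F j \<times>\<times> product_group I F)) (carrier (product_group (insert j I) F))"
    by (rule bij_betwI[where g = "\<lambda>x. (x j, restrict x I)"])
      (use assms in \<open>auto simp: PiE_iff extensional_def fun_eq_iff split: if_splits\<close>)
qed

lemma product_group_proj_surj:
  assumes "i \<in> I" "\<And>k. k \<in> I \<Longrightarrow> group (F k)"
  shows "(\<lambda>x. x i) ` carrier (product_group I F) = carrier (F i)"
proof
  show "carrier (F i) \<subseteq> (\<lambda>x. x i) ` carrier (product_group I F)"
  proof
    fix y assume "y \<in> carrier (F i)"
    then have "(\<lambda>k\<in>I. if k = i then y else \<one>\<^bsub>F k\<^esub>) \<in> carrier (product_group I F)"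
      using assms(2) group.is_monoid monoid.one_closed by fastforce
    then show "y \<in> (\<lambda>x. x i) ` carrier (product_group I F)"
      by (rule image_eqI[rotated]) (simp add: assms(1))
  qed
qed (use assms(1) in auto)

lemma (in group) quotient_INT_iso_product:
  assumes "finite J" "J \<noteq> {}" "\<And>j. j \<in> J \<Longrightarrow> maximal_normal G (N j)"
  shows "\<exists>I\<subseteq>J. I \<noteq> {} \<and> G Mod (\<Inter>j\<in>J. N j) \<cong> product_group I (\<lambda>i. G Mod N i)"
  using assms
proof (induction J rule: finite_ne_induct)
  case (singleton j)
  show ?case
    using iso_product_group_singleton[of "\<lambda>i. G Mod N i" j] by (intro exI[of _ "{j}"]) simp
next
  case (insert j J)
  have Nj: "maximal_normal G (N j)" and Nj_normal: "N j \<lhd> G"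
    using insert.prems by (auto simp: maximal_normal_def)
  obtain I where I: "I \<subseteq> J" "I \<noteq> {}" "G Mod (\<Inter>j\<in>J. N j) \<cong> product_group I (\<lambda>i. G Mod N i)"
    using insert.IH insert.prems by auto
  define M where "M = (\<Inter>j\<in>J. N j)"
  have M: "M \<lhd> G"
    unfolding M_def using normal_INT[OF insert.hyps(2)] insert.prems by (auto simp: maximal_normal_def)
  have Int: "(\<Inter>j\<in>insert j J. N j) = N j \<inter> M" by (simp add: M_def)
  show ?case
  proof (cases "M \<subseteq> N j")
    case True
    then have "(\<Inter>j\<in>insert j J. N j) = (\<Inter>j\<in>J. N j)" using Int M_def by blast
    with I show ?thesis by (intro exI[of _ I]) auto
  next
    case False
    have "G Mod (N j \<inter> M) \<cong> (G Mod N j) \<times>\<times> (G Mod M)"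
      by (rule quotient_Int_iso_DirProd[OF Nj_normal M maximal_normal_set_mult_eq[OF Nj M False]])
    also have "\<dots> \<cong> (G Mod N j) \<times>\<times> product_group I (\<lambda>i. G Mod N i)"
      using group.DirProd_iso_trans[OF normal.factorgroup_is_group[OF Nj_normal] iso_refl] I(3)
      by (simp add: M_def)
    also have "\<dots> \<cong> product_group (insert j I) (\<lambda>i. G Mod N i)"
      by (rule iso_product_group_insert) (use I(1) insert.hyps in blast)
    finally show ?thesis using Int I(1,2) by (intro exI[of _ "insert j I"]) auto
  qed
qed

lemma (in group) maximal_normal_quotient_iso_factor:
  assumes I: "finite I" "I \<noteq> {}" and F: "\<And>i. i \<in> I \<Longrightarrow> simple_group (F i)"
    and \<psi>: "\<psi> \<in> hom G (product_group I F)" "\<psi> ` carrier G = carrier (product_group I F)"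
    and N: "maximal_normal G N" and ker: "kernel G (product_group I F) \<psi> \<subseteq> N"
  shows "\<exists>i\<in>I. G Mod N \<cong> F i"
proof -
  define K where "K i = kernel G (F i) (\<lambda>x. \<psi> x i)" for i
  have F_group: "\<And>i. i \<in> I \<Longrightarrow> group (F i)" using F simple_group.axioms(1) by blast
  have quot: "G Mod K i \<cong> F i" and max: "maximal_normal G (K i)" if i: "i \<in> I" for i
  proof -
    have "(\<lambda>x. \<psi> x i) \<in> hom G (F i)" using \<psi>(1) i by (auto simp: hom_def Pi_iff)
    then interpret \<pi>: group_hom G "F i" "\<lambda>x. \<psi> x i"
      by (simp add: group_hom_def group_hom_axioms_def F_group[OF i])
    have "(\<lambda>x. \<psi> x i) ` carrier G = (\<lambda>x. x i) ` \<psi> ` carrier G" by (simp add: image_image)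
    then have "(\<lambda>x. \<psi> x i) ` carrier G = carrier (F i)"
      using product_group_proj_surj[of i I F, OF i F_group] \<psi>(2) by simp
    then show "G Mod K i \<cong> F i" "maximal_normal G (K i)"
      using \<pi>.maximal_normal_kernel[OF F[OF i]] by (simp_all add: K_def)
  qed
  have "(\<Inter>i\<in>I. K i) \<subseteq> N"
  proof
    fix x assume "x \<in> (\<Inter>i\<in>I. K i)"
    then have x: "x \<in> carrier G" "\<And>i. i \<in> I \<Longrightarrow> \<psi> x i = \<one>\<^bsub>F i\<^esub>"
      using I(2) by (auto simp: K_def kernel_def)
    moreover have "\<psi> x \<in> (\<Pi>\<^sub>E i\<in>I. carrier (F i))" using \<psi>(1) x(1) by (auto simp: hom_def)
    ultimately have "\<psi> x = \<one>\<^bsub>product_group I F\<^esub>" by (auto simp: PiE_iff extensional_def)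
    then show "x \<in> N" using ker x(1) by (auto simp: kernel_def)
  qed
  then obtain i where "i \<in> I" "G Mod N \<cong> G Mod K i"
    using maximal_normal_above_INT_iso[of I K, OF I max N] by blast
  then show ?thesis using quot iso_trans by blast
qed

lemma (in group) baer_rad_normal:
  assumes "maximal_normal G N"
  shows "baer_rad G \<lhd> G"
proof -
  have "(\<Inter>H\<in>{H. maximal_normal G H}. H) \<lhd> G"
    by (rule normal_INT) (use assms in \<open>auto simp: maximal_normal_def\<close>)
  then show ?thesis by (simp add: baer_rad_def)
qed

lemma (in group) baer_rad_quotient_iso_product:
  assumes fin: "finite (carrier G)" and nontriv: "carrier G \<noteq> {\<one>}"
  obtains I :: "nat set" and N :: "nat \<Rightarrow> 'a set"
  where "finite I" "I \<noteq> {}" "\<And>i. i \<in> I \<Longrightarrow> maximal_normal G (N i)"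
    and "G Mod baer_rad G \<cong> product_group I (\<lambda>i. G Mod N i)"
proof -
  let ?NN = "{N. maximal_normal G N}"
  have "finite ?NN"
    by (rule finite_subset[of _ "Pow (carrier G)"])
      (auto simp: fin maximal_normal_def dest: normal_imp_subgroup subgroup.subset)
  then obtain e where e: "bij_betw e {0..<card ?NN} ?NN" using ex_bij_betw_nat_finite by blast
  obtain M where "maximal_normal G M" using exists_maximal_normal[OF fin nontriv] .
  then have "card ?NN \<noteq> 0" using \<open>finite ?NN\<close> by auto
  moreover have max: "\<And>j. j \<in> {0..<card ?NN} \<Longrightarrow> maximal_normal G (e j)"
    using bij_betwE[OF e] by blast
  moreover have "baer_rad G = (\<Inter>j\<in>{0..<card ?NN}. e j)"
    by (simp add: baer_rad_def bij_betw_imp_surj_on[OF e])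
  ultimately obtain I where "I \<subseteq> {0..<card ?NN}" "I \<noteq> {}"
    "G Mod baer_rad G \<cong> product_group I (\<lambda>i. G Mod e i)"
    using quotient_INT_iso_product[of "{0..<card ?NN}" e] by auto
  then show thesis using that[of I e] max finite_subset by blast
qed

section \<open>Dual classes\<close>

lemma in_class_iso_cong:
  assumes "group G" "G \<cong> H"
  shows "in_class D G \<longleftrightarrow> in_class D H"
  using assms group.iso_sym iso_trans unfolding in_class_def by metis

definition has_nontrivial_quotient_in :: "(nat monoid \<Rightarrow> bool) \<Rightarrow> ('a, 'b) monoid_scheme \<Rightarrow> bool" where
  "has_nontrivial_quotient_in D G \<longleftrightarrow> (\<exists>K. K \<lhd> G \<and> K \<noteq> carrier G \<and> in_class D (G Mod K))"

lemma dual_class_iff: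
  "dual_class D G \<longleftrightarrow> group G \<and> finite (carrier G) \<and> \<not> has_nontrivial_quotient_in D G"
  unfolding dual_class_def has_nontrivial_quotient_in_def by blast

lemma has_nontrivial_quotient_in_iso:
  assumes "group G" "group H" "G \<cong> H" "has_nontrivial_quotient_in D H"
  shows "has_nontrivial_quotient_in D G"
proof -
  obtain \<phi> where \<phi>: "\<phi> \<in> iso G H" using assms(3) by (auto simp: is_iso_def)
  interpret \<phi>: group_hom G H \<phi>
    using \<phi> assms(1,2) by (simp add: group_hom_def group_hom_axioms_def iso_def)
  have surj: "\<phi> ` carrier G = carrier H" using \<phi> by (simp add: iso_def bij_betw_def)
  obtain K where K: "K \<lhd> H" "K \<noteq> carrier H" "in_class D (H Mod K)"
    using assms(4) unfolding has_nontrivial_quotient_in_def by blast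
  note preimage = \<phi>.normal_preimage[OF surj K(1)]
  have "in_class D (G Mod {x \<in> carrier G. \<phi> x \<in> K})"
    using in_class_iso_cong[OF normal.factorgroup_is_group[OF preimage(1)] preimage(2)] K(3) by simp
  then show ?thesis using preimage(1,3) K(2) unfolding has_nontrivial_quotient_in_def by blast
qed

lemma (in group) in_class_dual_class_iff:
  assumes fin: "finite (carrier G)"
  shows "in_class (dual_class D) G \<longleftrightarrow> \<not> has_nontrivial_quotient_in D G"
proof
  assume "in_class (dual_class D) G"
  then obtain Y where Y: "dual_class D Y" "G \<cong> Y" by (auto simp: in_class_def)
  then show "\<not> has_nontrivial_quotient_in D G"
    using has_nontrivial_quotient_in_iso[of Y G D] is_group iso_sym by (auto simp: dual_class_iff)
next
  assume "\<not> has_nontrivial_quotient_in D G"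
  moreover obtain Y :: "nat monoid" where Y: "group Y" "finite (carrier Y)" "G \<cong> Y"
    using ex_nat_iso_copy[OF fin] .
  ultimately have "dual_class D Y"
    using has_nontrivial_quotient_in_iso[OF is_group Y(1,3)] by (auto simp: dual_class_iff)
  then show "in_class (dual_class D) G" using Y(3) by (auto simp: in_class_def)
qed

lemma (in simple_group) has_nontrivial_quotient_in_iff:
  "has_nontrivial_quotient_in D G \<longleftrightarrow> in_class D G"
proof -
  have proper: "K \<lhd> G \<and> K \<noteq> carrier G \<longleftrightarrow> K = {\<one>}" for K
    using no_real_normal_subgroup one_is_normal simple_not_triv by blast
  have "in_class D (G Mod {\<one>}) \<longleftrightarrow> in_class D G"
    by (rule in_class_iso_cong[OF normal.factorgroup_is_group[OF one_is_normal]
          is_isoI[OF trivial_factor_iso]])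
  then show ?thesis unfolding has_nontrivial_quotient_in_def conj_assoc[symmetric] proper by simp
qed

lemma (in group) in_double_dual_class_iff:
  assumes fin: "finite (carrier G)"
  shows "in_class (dual_class (dual_class C)) G \<longleftrightarrow>
    (\<forall>N. maximal_normal G N \<longrightarrow> in_class C (G Mod N))"
proof -
  have "in_class (dual_class (dual_class C)) G \<longleftrightarrow> \<not> has_nontrivial_quotient_in (dual_class C) G"
    by (rule in_class_dual_class_iff[OF fin])
  also have "\<dots> \<longleftrightarrow> (\<forall>K. K \<lhd> G \<and> K \<noteq> carrier G \<longrightarrow> \<not> in_class (dual_class C) (G Mod K))"
    unfolding has_nontrivial_quotient_in_def by blast
  also have "\<dots> \<longleftrightarrow> (\<forall>K. K \<lhd> G \<and> K \<noteq> carrier G \<longrightarrow> has_nontrivial_quotient_in C (G Mod K))"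
    using group.in_class_dual_class_iff[OF normal.factorgroup_is_group normal.finite_FactGroup[OF _ fin]]
    by simp
  also have "\<dots> \<longleftrightarrow> (\<forall>N. maximal_normal G N \<longrightarrow> in_class C (G Mod N))"
  proof
    assume "\<forall>K. K \<lhd> G \<and> K \<noteq> carrier G \<longrightarrow> has_nontrivial_quotient_in C (G Mod K)"
    then show "\<forall>N. maximal_normal G N \<longrightarrow> in_class C (G Mod N)"
      using simple_group.has_nontrivial_quotient_in_iff by (auto simp: maximal_normal_def)
  next
    assume all: "\<forall>N. maximal_normal G N \<longrightarrow> in_class C (G Mod N)"
    show "\<forall>K. K \<lhd> G \<and> K \<noteq> carrier G \<longrightarrow> has_nontrivial_quotient_in C (G Mod K)"
    proof (intro allI impI, elim conjE)
      fix K assume K: "K \<lhd> G" "K \<noteq> carrier G"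
      interpret K: normal K G by (rule K(1))
      obtain L where L: "maximal_normal (G Mod K) L"
        using group.exists_maximal_normal[OF K.factorgroup_is_group K.finite_FactGroup[OF fin]
            K.FactGroup_nontrivial[OF K(2)]] by blast
      then obtain N where N: "maximal_normal G N" and iso: "G Mod N \<cong> (G Mod K) Mod L"
        by (rule K.maximal_normal_FactGroup_lift)
      have "group (G Mod N)" using N normal.factorgroup_is_group by (auto simp: maximal_normal_def)
      then have "in_class C ((G Mod K) Mod L)" using all N in_class_iso_cong[OF _ iso] by blast
      then show "has_nontrivial_quotient_in C (G Mod K)"
        using L unfolding has_nontrivial_quotient_in_def maximal_normal_def by blast
    qed
  qed
  finally show ?thesis .
qed

lemma (in group) baer_rad_quotient_iso_product_in_class:
  assumes C: "\<And>Z. C Z \<Longrightarrow> group Z \<and> finite (carrier Z)"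
    and fin: "finite (carrier G)" and nontriv: "carrier G \<noteq> {\<one>}"
    and all: "\<forall>N. maximal_normal G N \<longrightarrow> in_class C (G Mod N)"
  shows "\<exists>(I :: nat set) (F :: nat \<Rightarrow> nat monoid).
       finite I \<and> I \<noteq> {} \<and>
       (\<forall>i\<in>I. simple_group (F i) \<and> finite (carrier (F i)) \<and> in_class C (F i)) \<and>
       G Mod (baer_rad G) \<cong> product_group I F"
proof -
  obtain I and N :: "nat \<Rightarrow> 'a set" where I: "finite I" "I \<noteq> {}"
    and N: "\<And>i. i \<in> I \<Longrightarrow> maximal_normal G (N i)"
    and iso: "G Mod baer_rad G \<cong> product_group I (\<lambda>i. G Mod N i)"
    using baer_rad_quotient_iso_product[OF fin nontriv] by blast
  define F where "F i = (SOME Z. C Z \<and> G Mod N i \<cong> Z)" for i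
  have F: "C (F i) \<and> G Mod N i \<cong> F i" if "i \<in> I" for i
  proof -
    have "\<exists>Z. C Z \<and> G Mod N i \<cong> Z" using all N[OF that] by (simp add: in_class_def)
    then show ?thesis unfolding F_def by (rule someI_ex)
  qed
  have quot_group: "group (G Mod N i)" and quot_simple: "simple_group (G Mod N i)" if "i \<in> I" for i
    using N[OF that] normal.factorgroup_is_group by (auto simp: maximal_normal_def)
  have "product_group I (\<lambda>i. G Mod N i) \<cong> product_group I F"
    by (rule iso_product_groupI) (use F C quot_group in blast)+
  then have "G Mod baer_rad G \<cong> product_group I F" using iso iso_trans by blast
  moreover have "simple_group (F i) \<and> finite (carrier (F i)) \<and> in_class C (F i)" if "i \<in> I" for i
    using F[OF that] C is_iso_simple_group[OF quot_simple[OF that]] by (auto simp: in_class_def)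
  ultimately show ?thesis using I by blast
qed

lemma (in group) maximal_normal_quotient_in_class:
  assumes I: "finite I" "I \<noteq> {}" and F: "\<And>i. i \<in> I \<Longrightarrow> simple_group (F i) \<and> in_class C (F i)"
    and iso: "G Mod baer_rad G \<cong> product_group I F" and N: "maximal_normal G N"
  shows "in_class C (G Mod N)"
proof -
  have F_simple: "\<And>i. i \<in> I \<Longrightarrow> simple_group (F i)" using F by blast
  have "group (product_group I F)"
    by (rule product_group) (use F_simple simple_group.axioms(1) in blast)
  then obtain \<psi> where \<psi>: "\<psi> \<in> hom G (product_group I F)"
    "\<psi> ` carrier G = carrier (product_group I F)" "kernel G (product_group I F) \<psi> = baer_rad G"
    using normal.iso_FactGroup_obtain_hom[OF baer_rad_normal[OF N] iso] by blast
  moreover have "baer_rad G \<subseteq> N" using N by (auto simp: baer_rad_def)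
  ultimately obtain i where i: "i \<in> I" "G Mod N \<cong> F i"
    using maximal_normal_quotient_iso_factor[of I F, OF I F_simple \<psi>(1,2) N] by auto
  have "group (G Mod N)" using N normal.factorgroup_is_group by (auto simp: maximal_normal_def)
  then show ?thesis using in_class_iso_cong i F by blast
qed

theorem proposition3p7:
  fixes C :: "nat monoid \<Rightarrow> bool" and G :: "('a, 'b) monoid_scheme"
  assumes "group_class C"
    and "group G" and "finite (carrier G)" and "carrier G \<noteq> {\<one>\<^bsub>G\<^esub>}"
  shows "in_class (dual_class (dual_class C)) G \<longleftrightarrow>
    (\<exists>(I :: nat set) (F :: nat \<Rightarrow> nat monoid).
       finite I \<and> I \<noteq> {} \<and>
       (\<forall>i\<in>I. simple_group (F i) \<and> finite (carrier (F i)) \<and> in_class C (F i)) \<and>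
       G Mod (baer_rad G) \<cong> product_group I F)"
proof -
  interpret group G by (rule assms(2))
  have C: "\<And>Z. C Z \<Longrightarrow> group Z \<and> finite (carrier Z)" using assms(1) by (simp add: group_class_def)
  have "in_class (dual_class (dual_class C)) G \<longleftrightarrow>
      (\<forall>N. maximal_normal G N \<longrightarrow> in_class C (G Mod N))"
    by (rule in_double_dual_class_iff[OF assms(3)])
  also have "\<dots> \<longleftrightarrow> (\<exists>(I :: nat set) (F :: nat \<Rightarrow> nat monoid).
       finite I \<and> I \<noteq> {} \<and>
       (\<forall>i\<in>I. simple_group (F i) \<and> finite (carrier (F i)) \<and> in_class C (F i)) \<and>
       G Mod (baer_rad G) \<cong> product_group I F)"
    using baer_rad_quotient_iso_product_in_class[OF C assms(3,4)] maximal_normal_quotient_in_class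
    by blast
  finally show ?thesis .
qed

end
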